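(* Let $s>2$ be an integer, let $k$ be a positive even integer, and let $a_1,\dots,a_k$ be positive integers with $a_{2i-1}+a_{2i}=s$ for $i=1,\dots,k/2$. If \[ k \ \ge\ 2^{\frac{s}{2}+1}\cdot\left\lceil \left(\frac{s+3}{s-2}\right)^{\frac{s}{2}-1}\left(\frac{5s+6}{5s-6}\right)+1\right\rceil, \] then \[ \Big[0,\tfrac{k}{2}\Big]=\Big\{\sum_{i=1}^{k/2} x_{2i-1}^{a_{2i-1}}x_{2i}^{a_{2i}} \;:\; x_1,\dots,x_k\in C\Big\}. \]
   Context: $C\subseteq[0,1]$ denotes the classical middle-thirds (ternary) Cantor set. *)

theory Defs
  imports "HOL-Analysis.Analysis"
begin

fun cantor_stage :: "nat \<Rightarrow> real set" where
  "cantor_stage 0 = {0..1}"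
| "cantor_stage (Suc n) = (\<lambda>x. x / 3) ` cantor_stage n \<union> (\<lambda>x. x / 3 + 2 / 3) ` cantor_stage n"

definition cantor_set :: "real set" where
  "cantor_set = (\<Inter>n. cantor_stage n)"

end

theory Submission
  imports Defs
begin

text \<open>The sums in question lie in \<open>[0, k/2]\<close> because \<open>C \<subseteq> [0,1]\<close>. The hypothesis on \<open>k\<close> is
  used only through \<open>12 \<cdot> 2^\<lfloor>s/2\<rfloor> \<le> k\<close>; by pigeonhole on the smaller exponent \<open>e\<close> of each pair it
  yields \<open>r \<ge> 5 + 2^(e+1)\<close> pairs with exponents \<open>{e, s - e}\<close>, while every other pair contributes
  \<open>0\<close> or \<open>1\<close>. The sums of \<open>r\<close> terms \<open>\<xi>^e \<eta>^b\<close> (\<open>\<xi>, \<eta> \<in> C\<close>, \<open>b = s - e \<ge> 2\<close>) fill \<open>[0, r]\<close>.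
  The core is that four \<open>b\<close>-th powers of points of \<open>C\<close> attain every value in \<open>[3, 4]\<close>:
  follow the triadic intervals containing the points, moving one coordinate at a time to the
  left or right third of its interval; the target stays between the lower and the upper power
  sum because the other coordinates can bridge the removed middle third. From \<open>[3, 4]\<close>, steps
  \<open>1\<close> and \<open>(2/3)^e\<close> together with the scaling \<open>t \<mapsto> 3^-e t\<close> reach all of \<open>[0, r]\<close>.\<close>

lemma cantor_set_subset: "cantor_set \<subseteq> {0..1}"
  unfolding cantor_set_def by (metis INT_lower UNIV_I cantor_stage.simps(1))

lemma zero_in_cantor_set: "0 \<in> cantor_set"
proof -
  have "0 \<in> cantor_stage n" for n
    by (induction n) (auto simp: image_iff intro: bexI[of _ 0])
  then show ?thesis unfolding cantor_set_def by blast
qed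

lemma one_in_cantor_set: "1 \<in> cantor_set"
proof -
  have "1 \<in> cantor_stage n" for n
    by (induction n) (auto simp: image_iff intro: bexI[of _ 1])
  then show ?thesis unfolding cantor_set_def by blast
qed

lemma cantor_set_third:
  assumes "x \<in> cantor_set"
  shows "x / 3 \<in> cantor_set" and "x / 3 + 2 / 3 \<in> cantor_set"
proof -
  have x: "x \<in> cantor_stage n" for n
    using assms unfolding cantor_set_def by blast
  have "x / 3 \<in> cantor_stage n \<and> x / 3 + 2 / 3 \<in> cantor_stage n" for n
  proof (cases n)
    case 0
    then show ?thesis using x[of 0] by simp
  qed (use x in auto)
  then show "x / 3 \<in> cantor_set" "x / 3 + 2 / 3 \<in> cantor_set"
    unfolding cantor_set_def by blast+
qed

lemma compact_cantor_stage: "compact (cantor_stage n)"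
  by (induction n) (auto intro!: compact_Un compact_continuous_image continuous_intros)

lemma closed_cantor_set: "closed cantor_set"
  unfolding cantor_set_def by (simp add: closed_INT compact_imp_closed compact_cantor_stage)

fun cantor_left_ends :: "nat \<Rightarrow> real set" where
  "cantor_left_ends 0 = {0}"
| "cantor_left_ends (Suc n) = (\<lambda>x. x / 3) ` cantor_left_ends n \<union> (\<lambda>x. x / 3 + 2 / 3) ` cantor_left_ends n"

lemma cantor_left_ends_subset: "cantor_left_ends n \<subseteq> cantor_set"
  by (induction n) (auto simp: zero_in_cantor_set cantor_set_third)

lemma cantor_left_ends_Suc:
  "c \<in> cantor_left_ends n \<Longrightarrow>
     c \<in> cantor_left_ends (Suc n) \<and> c + 2 * (1/3) ^ Suc n \<in> cantor_left_ends (Suc n)"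
proof (induction n arbitrary: c)
  case 0
  then show ?case by (simp add: image_iff)
next
  case (Suc n)
  let ?E = "cantor_left_ends (Suc n)"
  have step: "cantor_left_ends (Suc (Suc n)) = (\<lambda>x. x / 3) ` ?E \<union> (\<lambda>x. x / 3 + 2 / 3) ` ?E"
    by (rule cantor_left_ends.simps(2))
  from Suc.prems consider c' where "c' \<in> cantor_left_ends n" "c = c' / 3"
    | c' where "c' \<in> cantor_left_ends n" "c = c' / 3 + 2 / 3"
    by auto
  then show ?case
  proof cases
    case 1
    then have "c + 2 * (1/3) ^ Suc (Suc n) = (c' + 2 * (1/3) ^ Suc n) / 3"
      by simp
    then show ?thesis
      using 1(2) Suc.IH[OF 1(1)] unfolding step by blast
  next
    case 2
    then have "c + 2 * (1/3) ^ Suc (Suc n) = (c' + 2 * (1/3) ^ Suc n) / 3 + 2 / 3"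
      by simp
    then show ?thesis
      using 2(2) Suc.IH[OF 2(1)] unfolding step by blast
  qed
qed

lemma one_minus_third_power_in_cantor_left_ends: "1 - (1/3::real) ^ n \<in> cantor_left_ends n"
proof (induction n)
  case (Suc n)
  have "1 - (1/3::real) ^ Suc n = (1 - (1/3) ^ n) / 3 + 2 / 3"
    by (simp add: field_simps)
  with Suc.IH show ?case by auto
qed simp

section \<open>Sums of \<open>b\<close>-th powers of points of the Cantor set\<close>

lemma power_increment_bounds:
  fixes y d :: real
  assumes "0 \<le> y" "0 \<le> d"
  shows "real b * y ^ (b - 1) * d \<le> (y + d) ^ b - y ^ b"
    and "(y + d) ^ b - y ^ b \<le> real b * (y + d) ^ (b - 1) * d"
proof -
  have "real b * y ^ (b - 1) * d \<le> (y + d) ^ b - y ^ b \<and>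
        (y + d) ^ b - y ^ b \<le> real b * (y + d) ^ (b - 1) * d"
  proof (cases "d = 0")
    case False
    then have "y < y + d" using assms by simp
    from MVT2[OF this, of "\<lambda>x. x ^ b" "\<lambda>x. real b * x ^ (b - 1)"]
    obtain z where z: "y < z" "z < y + d" "(y + d) ^ b - y ^ b = d * (real b * z ^ (b - 1))"
      using DERIV_pow by fastforce
    have "y ^ (b - 1) \<le> z ^ (b - 1)" "z ^ (b - 1) \<le> (y + d) ^ (b - 1)"
      using z assms by (auto intro: power_mono)
    with z(3) assms show ?thesis
      by (auto intro!: mult_left_mono mult_right_mono simp: mult.commute mult.left_commute)
  qed simp
  then show "real b * y ^ (b - 1) * d \<le> (y + d) ^ b - y ^ b"
    and "(y + d) ^ b - y ^ b \<le> real b * (y + d) ^ (b - 1) * d"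
    by auto
qed

lemma power_increment_le_in_unit_interval:
  fixes y d :: real
  assumes "0 \<le> y" "0 \<le> d" "y + d \<le> 1"
  shows "(y + d) ^ b - y ^ b \<le> real b * d"
proof -
  have "(y + d) ^ (b - 1) \<le> 1"
    using assms by (intro power_le_one) auto
  then have "real b * (y + d) ^ (b - 1) * d \<le> real b * 1 * d"
    using assms(2) by (intro mult_right_mono mult_left_mono) auto
  with power_increment_bounds(2)[OF assms(1,2), of b] show ?thesis by linarith
qed

lemma power_increment_ge:
  fixes y d p :: real
  assumes "0 \<le> p" "p \<le> y" "0 \<le> d"
  shows "real b * p ^ (b - 1) * d \<le> (y + d) ^ b - y ^ b"
proof -
  have "real b * p ^ (b - 1) * d \<le> real b * y ^ (b - 1) * d"
    using assms by (intro mult_right_mono mult_left_mono power_mono) auto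
  with power_increment_bounds(1)[of y d b] assms show ?thesis by linarith
qed

lemma bracket_refine_coordinate:
  fixes \<phi> :: "real \<Rightarrow> real" and c w :: "nat \<Rightarrow> real"
  assumes "j < q"
    and lower: "(\<Sum>i<q. \<phi> (c i)) \<le> \<tau>" and upper: "\<tau> \<le> (\<Sum>i<q. \<phi> (c i + w i))"
    and gap: "\<phi> (c j + 2 * w j / 3) - \<phi> (c j + w j / 3) \<le> (\<Sum>i\<in>{..<q}-{j}. \<phi> (c i + w i) - \<phi> (c i))"
  obtains d where "d = c j \<or> d = c j + 2 * w j / 3"
    and "(\<Sum>i<q. \<phi> ((c(j := d)) i)) \<le> \<tau>"
    and "\<tau> \<le> (\<Sum>i<q. \<phi> ((c(j := d)) i + (w(j := w j / 3)) i))"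
proof -
  define A where "A = (\<Sum>i\<in>{..<q}-{j}. \<phi> (c i))"
  define B where "B = (\<Sum>i\<in>{..<q}-{j}. \<phi> (c i + w i))"
  have remove: "(\<Sum>i<q. F i) = F j + (\<Sum>i\<in>{..<q}-{j}. F i)" for F :: "nat \<Rightarrow> real"
    using \<open>j < q\<close> by (simp add: sum.remove)
  have others: "(\<Sum>i\<in>{..<q}-{j}. G ((c(j := d)) i) ((w(j := v)) i)) = (\<Sum>i\<in>{..<q}-{j}. G (c i) (w i))"
    for G :: "real \<Rightarrow> real \<Rightarrow> real" and d v
    by (rule sum.cong) auto
  have lower_upd: "(\<Sum>i<q. \<phi> ((c(j := d)) i)) = \<phi> d + A" for d
    using others[of "\<lambda>x _. \<phi> x" d] unfolding remove[of "\<lambda>i. \<phi> ((c(j := d)) i)"] A_def by simp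
  have upper_upd: "(\<Sum>i<q. \<phi> ((c(j := d)) i + (w(j := v)) i)) = \<phi> (d + v) + B" for d v
    using others[of "\<lambda>x y. \<phi> (x + y)" d v]
    unfolding remove[of "\<lambda>i. \<phi> ((c(j := d)) i + (w(j := v)) i)"] B_def by simp
  have "B - A = (\<Sum>i\<in>{..<q}-{j}. \<phi> (c i + w i) - \<phi> (c i))"
    unfolding A_def B_def by (simp add: sum_subtractf)
  moreover have "\<phi> (c j) + A \<le> \<tau>" "\<tau> \<le> \<phi> (c j + w j) + B"
    using lower upper lower_upd[of "c j"] upper_upd[of "c j" "w j"] by simp_all
  ultimately have lower_gap: "\<phi> (c j + 2 * w j / 3) + A \<le> \<phi> (c j + w j / 3) + B"
    using gap by linarith
  show ?thesis
  proof (cases "\<tau> \<le> \<phi> (c j + w j / 3) + B")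
    case True
    show ?thesis
      by (rule that[of "c j"]) (use lower True upper_upd[of "c j" "w j / 3"] in simp_all)
  next
    case False
    have thirds: "c j + 2 * w j / 3 + w j / 3 = c j + w j"
      by simp
    show ?thesis
      using lower_upd[of "c j + 2 * w j / 3"] upper_upd[of "c j + 2 * w j / 3" "w j / 3", unfolded thirds]
        \<open>\<tau> \<le> \<phi> (c j + w j) + B\<close> False lower_gap
      by (intro that[of "c j + 2 * w j / 3"]) simp_all
  qed
qed

lemma middle_third_bridged:
  fixes c w :: "nat \<Rightarrow> real"
  assumes "j < q" "0 \<le> p" "0 < g" and balance: "1 \<le> (real q - 1) * p ^ (b - 1)"
    and "w j = g" "c j + g \<le> 1" and others: "\<forall>i<q. p \<le> c i \<and> g / 3 \<le> w i"
  shows "(c j + 2 * w j / 3) ^ b - (c j + w j / 3) ^ b \<le> (\<Sum>i\<in>{..<q}-{j}. (c i + w i) ^ b - c i ^ b)"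
proof -
  have "0 \<le> c j"
    using others \<open>j < q\<close> \<open>0 \<le> p\<close> by force
  then have "(c j + 2 * w j / 3) ^ b - (c j + w j / 3) ^ b \<le> real b * (g / 3)"
    using power_increment_le_in_unit_interval[of "c j + g / 3" "g / 3" b] assms(3,5,6)
    by (simp add: algebra_simps)
  also have "\<dots> \<le> (\<Sum>i\<in>{..<q}-{j}. (c i + w i) ^ b - c i ^ b)"
  proof -
    have "real b * p ^ (b - 1) * (g / 3) \<le> (c i + w i) ^ b - c i ^ b" if "i \<in> {..<q}-{j}" for i
    proof -
      have "p \<le> c i" "g / 3 \<le> w i"
        using others that by auto
      moreover have "real b * p ^ (b - 1) * (g / 3) \<le> real b * p ^ (b - 1) * w i"
        using \<open>0 \<le> p\<close> \<open>g / 3 \<le> w i\<close> by (intro mult_left_mono) auto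
      ultimately show ?thesis
        using power_increment_ge[OF \<open>0 \<le> p\<close>, of "c i" "w i" b] \<open>0 < g\<close> by linarith
    qed
    then have "real (card ({..<q}-{j})) * (real b * p ^ (b - 1) * (g / 3))
        \<le> (\<Sum>i\<in>{..<q}-{j}. (c i + w i) ^ b - c i ^ b)"
      by (rule sum_bounded_below)
    moreover have "card ({..<q}-{j}) = q - 1"
      using \<open>j < q\<close> by simp
    ultimately have "(real q - 1) * (real b * p ^ (b - 1) * (g / 3))
        \<le> (\<Sum>i\<in>{..<q}-{j}. (c i + w i) ^ b - c i ^ b)"
      using \<open>j < q\<close> by (simp add: of_nat_diff)
    moreover have "real b * (g / 3) * 1 \<le> real b * (g / 3) * ((real q - 1) * p ^ (b - 1))"
      using balance \<open>0 < g\<close> by (intro mult_left_mono) auto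
    moreover have "(real q - 1) * (real b * p ^ (b - 1) * (g / 3))
        = real b * (g / 3) * ((real q - 1) * p ^ (b - 1))"
      by (simp add: field_simps)
    ultimately show ?thesis
      by linarith
  qed
  finally show ?thesis .
qed

lemma refine_level:
  fixes c :: "nat \<Rightarrow> real" and q b K :: nat
  assumes "0 \<le> p" "H \<le> 1" and balance: "1 \<le> (real q - 1) * p ^ (b - 1)"
    and box: "\<forall>i<q. c i \<in> cantor_left_ends K \<and> p \<le> c i \<and> c i + (1/3) ^ K \<le> H"
    and lower: "(\<Sum>i<q. c i ^ b) \<le> \<tau>" and upper: "\<tau> \<le> (\<Sum>i<q. (c i + (1/3) ^ K) ^ b)"
  obtains c' where
    "\<forall>i<q. c' i \<in> cantor_left_ends (Suc K) \<and> c i \<le> c' i \<and> c' i + (1/3) ^ Suc K \<le> c i + (1/3) ^ K"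
    and "(\<Sum>i<q. c' i ^ b) \<le> \<tau>" and "\<tau> \<le> (\<Sum>i<q. (c' i + (1/3) ^ Suc K) ^ b)"
proof -
  define g :: real where "g = (1/3) ^ K"
  have "0 < g"
    unfolding g_def by simp
  define width where "width j i = (if i < j then g / 3 else g)" for j i :: nat
  have sweep: "\<exists>c'. (\<forall>i<q. (c' i = c i \<or> c' i = c i + 2 * g / 3) \<and> (j \<le> i \<longrightarrow> c' i = c i))
      \<and> (\<Sum>i<q. c' i ^ b) \<le> \<tau> \<and> \<tau> \<le> (\<Sum>i<q. (c' i + width j i) ^ b)" if "j \<le> q" for j
    using that
  proof (induction j)
    case 0
    show ?case
      using lower upper by (intro exI[of _ c]) (simp add: width_def g_def)
  next
    case (Suc j)
    then have "j < q" by simp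
    with Suc obtain c' where
      c': "\<forall>i<q. (c' i = c i \<or> c' i = c i + 2 * g / 3) \<and> (j \<le> i \<longrightarrow> c' i = c i)"
      and lower': "(\<Sum>i<q. c' i ^ b) \<le> \<tau>" and upper': "\<tau> \<le> (\<Sum>i<q. (c' i + width j i) ^ b)"
      by auto
    have "width j j = g"
      by (simp add: width_def)
    moreover have "c' j + g \<le> 1"
      using c' box \<open>j < q\<close> \<open>H \<le> 1\<close> unfolding g_def by fastforce
    moreover have "\<forall>i<q. p \<le> c' i \<and> g / 3 \<le> width j i"
      using c' box \<open>0 < g\<close> by (fastforce simp: width_def)
    ultimately have gap: "(c' j + 2 * width j j / 3) ^ b - (c' j + width j j / 3) ^ b
        \<le> (\<Sum>i\<in>{..<q}-{j}. (c' i + width j i) ^ b - c' i ^ b)"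
      by (rule middle_third_bridged[where c = c' and w = "width j", OF \<open>j < q\<close> \<open>0 \<le> p\<close> \<open>0 < g\<close> balance])
    obtain d where d: "d = c' j \<or> d = c' j + 2 * width j j / 3"
      and lower'': "(\<Sum>i<q. ((c'(j := d)) i) ^ b) \<le> \<tau>"
      and upper'': "\<tau> \<le> (\<Sum>i<q. ((c'(j := d)) i + ((width j)(j := width j j / 3)) i) ^ b)"
      using bracket_refine_coordinate[of j q "\<lambda>x. x ^ b" c' \<tau> "width j"] \<open>j < q\<close>
        lower' upper' gap by auto
    have "(width j)(j := width j j / 3) = width (Suc j)"
      by (auto simp: width_def)
    moreover have "d = c j \<or> d = c j + 2 * g / 3"
      using d c' \<open>j < q\<close> by (simp add: width_def)
    then have "\<forall>i<q. ((c'(j := d)) i = c i \<or> (c'(j := d)) i = c i + 2 * g / 3)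
        \<and> (Suc j \<le> i \<longrightarrow> (c'(j := d)) i = c i)"
      using c' by simp
    ultimately show ?case
      using lower'' upper'' by (intro exI[of _ "c'(j := d)"]) simp
  qed
  obtain c' where c': "\<forall>i<q. c' i = c i \<or> c' i = c i + 2 * g / 3"
    and lower': "(\<Sum>i<q. c' i ^ b) \<le> \<tau>" and upper': "\<tau> \<le> (\<Sum>i<q. (c' i + width q i) ^ b)"
    using sweep[of q] by auto
  have "c' i \<in> cantor_left_ends (Suc K)" if "i < q" for i
  proof -
    have "c i \<in> cantor_left_ends K"
      using box that by blast
    then have "c i \<in> cantor_left_ends (Suc K)" "c i + 2 * g / 3 \<in> cantor_left_ends (Suc K)"
      using cantor_left_ends_Suc[of "c i" K] unfolding g_def by simp_all
    then show ?thesis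
      using c' that by metis
  qed
  moreover have "c i \<le> c' i \<and> c' i + (1/3) ^ Suc K \<le> c i + (1/3) ^ K" if "i < q" for i
    using c' that \<open>0 < g\<close> by (auto simp: g_def)
  moreover have "(\<Sum>i<q. (c' i + width q i) ^ b) = (\<Sum>i<q. (c' i + (1/3) ^ Suc K) ^ b)"
    by (simp add: width_def g_def)
  ultimately show ?thesis
    using that[of c'] lower' upper' by presburger
qed

lemma cantor_power_sum_limit:
  fixes f :: "nat \<Rightarrow> nat \<Rightarrow> real" and \<delta> :: "nat \<Rightarrow> real"
  assumes "\<delta> \<longlonglongrightarrow> 0"
    and in_cantor: "\<And>n i. i < q \<Longrightarrow> f n i \<in> cantor_set"
    and mono: "\<And>n i. i < q \<Longrightarrow> f n i \<le> f (Suc n) i"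
    and bounded: "\<And>n i. i < q \<Longrightarrow> f n i \<le> H"
    and lower: "\<And>n. (\<Sum>i<q. f n i ^ b) \<le> \<tau>"
    and upper: "\<And>n. \<tau> \<le> (\<Sum>i<q. (f n i + \<delta> n) ^ b)"
  obtains z where "\<forall>i<q. z i \<in> cantor_set" and "(\<Sum>i<q. z i ^ b) = \<tau>"
proof -
  define z where "z i = (SUP n. f n i)" for i
  have lim: "(\<lambda>n. f n i) \<longlonglongrightarrow> z i" "(\<lambda>n. f n i + \<delta> n) \<longlonglongrightarrow> z i" if "i < q" for i
  proof -
    have "bdd_above (range (\<lambda>n. f n i))"
      using bounded[OF that] by (intro bdd_aboveI[of _ H]) blast
    moreover have "incseq (\<lambda>n. f n i)"
      using mono[OF that] by (rule incseq_SucI)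
    ultimately show lim_f: "(\<lambda>n. f n i) \<longlonglongrightarrow> z i"
      unfolding z_def by (rule LIMSEQ_incseq_SUP)
    show "(\<lambda>n. f n i + \<delta> n) \<longlonglongrightarrow> z i"
      using tendsto_add[OF lim_f \<open>\<delta> \<longlonglongrightarrow> 0\<close>] by simp
  qed
  have "z i \<in> cantor_set" if "i < q" for i
    using closed_sequentially[OF closed_cantor_set _ lim(1)[OF that]] in_cantor[OF that] by blast
  moreover have "(\<Sum>i<q. z i ^ b) = \<tau>"
  proof (rule antisym)
    have "(\<lambda>n. \<Sum>i<q. f n i ^ b) \<longlonglongrightarrow> (\<Sum>i<q. z i ^ b)"
      using lim(1) by (intro tendsto_sum tendsto_power) simp
    with lower show "(\<Sum>i<q. z i ^ b) \<le> \<tau>"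
      by (intro LIMSEQ_le_const2) auto
  next
    have "(\<lambda>n. \<Sum>i<q. (f n i + \<delta> n) ^ b) \<longlonglongrightarrow> (\<Sum>i<q. z i ^ b)"
      using lim(2) by (intro tendsto_sum tendsto_power) simp
    with upper show "\<tau> \<le> (\<Sum>i<q. z i ^ b)"
      by (intro LIMSEQ_le_const) auto
  qed
  ultimately show ?thesis
    using that by blast
qed

lemma cantor_power_sum_attains:
  fixes b q L :: nat and p \<tau> :: real
  assumes "p \<in> cantor_left_ends L" "0 \<le> p" "p + (1/3) ^ L \<le> 1"
    and balance: "1 \<le> (real q - 1) * p ^ (b - 1)"
    and "real q * p ^ b \<le> \<tau>" "\<tau> \<le> real q * (p + (1/3) ^ L) ^ b"
  obtains z where "\<forall>i<q. z i \<in> cantor_set" and "(\<Sum>i<q. z i ^ b) = \<tau>"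
proof -
  define H where "H = p + (1/3) ^ L"
  define box where "box n c \<longleftrightarrow>
      (\<forall>i<q. c i \<in> cantor_left_ends (L + n) \<and> p \<le> c i \<and> c i + (1/3) ^ (L + n) \<le> H)
      \<and> (\<Sum>i<q. c i ^ b) \<le> \<tau> \<and> \<tau> \<le> (\<Sum>i<q. (c i + (1/3) ^ (L + n)) ^ b)" for n c
  have "\<exists>f. \<forall>n. box n (f n) \<and> (\<forall>i<q. f n i \<le> f (Suc n) i)"
  proof (rule dependent_nat_choice)
    show "\<exists>c. box 0 c"
      using assms unfolding box_def H_def by (intro exI[of _ "\<lambda>_. p"]) auto
  next
    fix n c
    assume "box n c"
    then have box_c: "\<forall>i<q. c i \<in> cantor_left_ends (L + n) \<and> p \<le> c i \<and> c i + (1/3) ^ (L + n) \<le> H"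
      and lower: "(\<Sum>i<q. c i ^ b) \<le> \<tau>" and upper: "\<tau> \<le> (\<Sum>i<q. (c i + (1/3) ^ (L + n)) ^ b)"
      unfolding box_def by blast+
    have "H \<le> 1"
      using assms(3) by (simp add: H_def)
    obtain c' where c': "\<forall>i<q. c' i \<in> cantor_left_ends (Suc (L + n)) \<and> c i \<le> c' i
          \<and> c' i + (1/3) ^ Suc (L + n) \<le> c i + (1/3) ^ (L + n)"
      and lower': "(\<Sum>i<q. c' i ^ b) \<le> \<tau>" and upper': "\<tau> \<le> (\<Sum>i<q. (c' i + (1/3) ^ Suc (L + n)) ^ b)"
      by (rule refine_level[OF \<open>0 \<le> p\<close> \<open>H \<le> 1\<close> balance box_c lower upper])
    have "c' i \<in> cantor_left_ends (L + Suc n) \<and> p \<le> c' i \<and> c' i + (1/3) ^ (L + Suc n) \<le> H"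
      if "i < q" for i
    proof -
      from c' that have "c' i \<in> cantor_left_ends (Suc (L + n))" "c i \<le> c' i"
        "c' i + (1/3) ^ Suc (L + n) \<le> c i + (1/3) ^ (L + n)"
        by blast+
      moreover from box_c that have "p \<le> c i" "c i + (1/3) ^ (L + n) \<le> H"
        by blast+
      ultimately show ?thesis
        by (simp del: cantor_left_ends.simps)
    qed
    then have "box (Suc n) c'"
      using lower' upper' unfolding box_def by simp
    then show "\<exists>c'. box (Suc n) c' \<and> (\<forall>i<q. c i \<le> c' i)"
      using c' by blast
  qed
  then obtain f where box_f: "\<And>n. box n (f n)" and mono_f: "\<And>n i. i < q \<Longrightarrow> f n i \<le> f (Suc n) i"
    by blast
  have "(\<lambda>n. (1/3::real) ^ L * (1/3) ^ n) \<longlonglongrightarrow> 0"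
    by (intro tendsto_mult_right_zero LIMSEQ_power_zero) simp
  then have "(\<lambda>n. (1/3::real) ^ (L + n)) \<longlonglongrightarrow> 0"
    by (simp add: power_add)
  moreover have "f n i \<in> cantor_set" "f n i \<le> H" if "i < q" for n i
  proof -
    from box_f[of n] that have "f n i \<in> cantor_left_ends (L + n)" "f n i + (1/3) ^ (L + n) \<le> H"
      unfolding box_def by blast+
    then show "f n i \<in> cantor_set" "f n i \<le> H"
      using cantor_left_ends_subset order_trans[of "f n i" "f n i + (1/3) ^ (L + n)" H] by auto
  qed
  moreover have "(\<Sum>i<q. f n i ^ b) \<le> \<tau>" "\<tau> \<le> (\<Sum>i<q. (f n i + (1/3) ^ (L + n)) ^ b)" for n
    using box_f[of n] unfolding box_def by blast+
  ultimately show ?thesis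
    using cantor_power_sum_limit[of "\<lambda>n. (1/3) ^ (L + n)" q f H b \<tau>] mono_f that by blast
qed

lemma one_plus_inverse_power_le_3: "(1 + 1 / real n) ^ n \<le> 3"
proof (cases "n = 0")
  case False
  have "(1 + 1 / real n) ^ n \<le> exp (1 / real n) ^ n"
    using exp_ge_add_one_self[of "1 / real n"] by (intro power_mono) (auto simp: add.commute)
  also have "\<dots> = exp (real n * (1 / real n))"
    by (rule exp_of_nat_mult[symmetric])
  also have "\<dots> = exp 1"
    using False by simp
  finally show ?thesis
    using exp_le by linarith
qed simp

lemma one_minus_inverse_power_ge: "2 \<le> b \<Longrightarrow> 1 / 3 \<le> (1 - 1 / real b) ^ (b - 1)"
proof -
  assume "2 \<le> b"
  then have "1 - 1 / real b = 1 / (1 + 1 / real (b - 1))"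
    by (simp add: of_nat_diff field_simps)
  then have "(1 - 1 / real b) ^ (b - 1) = 1 / (1 + 1 / real (b - 1)) ^ (b - 1)"
    by (simp add: power_one_over)
  moreover have "0 < (1 + 1 / real (b - 1)) ^ (b - 1)"
    by (simp add: add_pos_nonneg)
  ultimately show ?thesis
    using one_plus_inverse_power_le_3[of "b - 1"] by (simp add: field_simps)
qed

lemma exists_third_power_scale:
  assumes "2 \<le> b"
  obtains L where "(1/3) ^ L * real b \<le> 1" and "1 / 3 \<le> (1/3) ^ L * real b"
proof -
  obtain n where "3 ^ n < b" "b \<le> 3 ^ (n + 1)"
    using ex_power_ivl2[of 3 b] assms by auto
  then have "(3::real) ^ n < real b" "real b \<le> 3 ^ (n + 1)"
    by (metis of_nat_less_iff of_nat_numeral of_nat_power,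
        metis of_nat_le_iff of_nat_numeral of_nat_power)
  then have "(1/3) ^ (n + 1) * real b \<le> 1" "1 / 3 \<le> (1/3) ^ (n + 1) * real b"
    by (simp_all add: power_one_over field_simps)
  then show ?thesis
    by (rule that)
qed

text \<open>Take \<open>q = 4\<close> and the last left endpoint \<open>p = 1 - 3^-L\<close> with \<open>1/3 \<le> b 3^-L \<le> 1\<close>:
  then \<open>3 p^(b-1) \<ge> 3 (1 - 1/b)^(b-1) \<ge> 1\<close> and \<open>4 p^b \<le> 4 exp (-b 3^-L) \<le> 3\<close>.\<close>

lemma cantor_power_sums_3_4:
  fixes b :: nat and \<tau> :: real
  assumes "2 \<le> b" "3 \<le> \<tau>" "\<tau> \<le> 4"
  obtains z :: "nat \<Rightarrow> real" where "\<forall>i<4. z i \<in> cantor_set" and "(\<Sum>i<4. z i ^ b) = \<tau>"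
proof -
  obtain L where hb: "(1/3) ^ L * real b \<le> 1" "1 / 3 \<le> (1/3) ^ L * real b"
    using exists_third_power_scale[OF assms(1)] .
  define h :: real where "h = (1/3) ^ L"
  define p where "p = 1 - h"
  note hb = hb[folded h_def]
  have "h \<le> 1 / real b"
    using hb(1) assms(1) by (simp add: field_simps)
  moreover have "1 / real b \<le> 1 / 2"
    using assms(1) by (simp add: field_simps)
  ultimately have "1 - 1 / real b \<le> p" "h \<le> 1 / 2"
    unfolding p_def by linarith+
  moreover have "0 \<le> 1 - 1 / real b"
    using assms(1) by simp
  ultimately have "(1 - 1 / real b) ^ (b - 1) \<le> p ^ (b - 1)"
    by (intro power_mono)
  then have "1 / 3 \<le> p ^ (b - 1)"
    using one_minus_inverse_power_ge[OF assms(1)] by linarith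
  then have balance: "1 \<le> (real 4 - 1) * p ^ (b - 1)"
    by simp
  have "p ^ b \<le> exp (- h) ^ b"
    using exp_ge_add_one_self[of "- h"] \<open>h \<le> 1 / 2\<close> unfolding p_def by (intro power_mono) auto
  also have "\<dots> = exp (real b * (- h))"
    by (rule exp_of_nat_mult[symmetric])
  also have "\<dots> = exp (- (h * real b))"
    by (simp add: mult.commute)
  also have "\<dots> \<le> exp (- (1/3))"
    using hb(2) by simp
  also have "\<dots> \<le> 3 / 4"
    using exp_ge_add_one_self[of "1/3::real"] by (simp add: exp_minus field_simps)
  finally have lower: "real 4 * p ^ b \<le> \<tau>"
    using assms(2) by simp
  have upper: "\<tau> \<le> real 4 * (p + (1/3) ^ L) ^ b"
    using assms(3) unfolding p_def h_def by simp
  have "p \<in> cantor_left_ends L" "0 \<le> p" "p + (1/3) ^ L \<le> 1"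
    using one_minus_third_power_in_cantor_left_ends[of L] \<open>h \<le> 1 / 2\<close>
    unfolding p_def h_def by simp_all
  then obtain z :: "nat \<Rightarrow> real" where "\<forall>i<4. z i \<in> cantor_set" "(\<Sum>i<4. z i ^ b) = \<tau>"
    by (rule cantor_power_sum_attains[OF _ _ _ balance lower upper])
  then show ?thesis
    by (rule that)
qed

section \<open>Sums of products \<open>\<xi>^e \<eta>^b\<close>\<close>

lemma interval_subset_if_scaling_closed:
  fixes S :: "real set"
  assumes "0 < u" "u < 1" "0 \<le> c" and base: "{u * c..c} \<subseteq> S"
    and "0 \<in> S" and scale: "\<And>t. t \<in> S \<Longrightarrow> u * t \<in> S"
  shows "{0..c} \<subseteq> S"
proof -
  have layers: "{u ^ Suc n * c..c} \<subseteq> S" for n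
  proof (induction n)
    case 0
    show ?case using base by simp
  next
    case (Suc n)
    show ?case
    proof
      fix t
      assume t: "t \<in> {u ^ Suc (Suc n) * c..c}"
      show "t \<in> S"
      proof (cases "u ^ Suc n * c \<le> t")
        case True
        with t Suc.IH show ?thesis by auto
      next
        case False
        have "u ^ n * c \<le> c"
          using assms(1-3) by (simp add: mult_left_le_one_le power_le_one)
        then have "u * (u ^ n * c) \<le> u * c"
          using \<open>0 < u\<close> by (intro mult_left_mono) auto
        moreover have "t < u * (u ^ n * c)" "u * (u ^ Suc n * c) \<le> t"
          using False t by (simp_all add: algebra_simps)
        ultimately have "t / u \<in> {u ^ Suc n * c..c}"
          using \<open>0 < u\<close> by (simp add: field_simps)
        with Suc.IH scale[of "t / u"] \<open>0 < u\<close> show ?thesis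
          by auto
      qed
    qed
  qed
  show ?thesis
  proof
    fix t
    assume t: "t \<in> {0..c}"
    show "t \<in> S"
    proof (cases "t = 0")
      case False
      with t have "0 < t / c"
        by auto
      then obtain n where "u ^ n < t / c"
        using real_arch_pow_inv \<open>u < 1\<close> by blast
      moreover have "0 < c"
        using t False by auto
      ultimately have "u ^ n * c < t"
        by (simp add: field_simps)
      moreover have "u ^ Suc n * c \<le> u ^ n * c"
        using assms(1-3) by (intro mult_right_mono power_decreasing) auto
      ultimately have "u ^ Suc n * c \<le> t"
        by linarith
      with layers[of n] t show ?thesis
        by auto
    qed (use \<open>0 \<in> S\<close> in simp)
  qed
qed

lemma interval_extend_step:
  fixes A B :: "real set"
  assumes "{\<alpha>..\<beta>} \<subseteq> A" "0 \<le> w" "w \<le> \<beta> - \<alpha>" "A \<subseteq> B" "\<And>t. t \<in> A \<Longrightarrow> t + w \<in> B"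
  shows "{\<alpha>..\<beta> + w} \<subseteq> B"
proof
  fix t
  assume t: "t \<in> {\<alpha>..\<beta> + w}"
  show "t \<in> B"
  proof (cases "t \<le> \<beta>")
    case True
    with t assms(1,4) show ?thesis by auto
  next
    case False
    with t assms(1,3) have "t - w \<in> A"
      by auto
    from assms(5)[OF this] show ?thesis
      by simp
  qed
qed

definition cantor_pair_sums :: "nat \<Rightarrow> nat \<Rightarrow> nat \<Rightarrow> real set" where
  "cantor_pair_sums e b n =
     {\<Sum>i<n. \<xi> i ^ e * \<eta> i ^ b | \<xi> \<eta>. \<forall>i<n. \<xi> i \<in> cantor_set \<and> \<eta> i \<in> cantor_set}"

lemma cantor_pair_sums_0: "cantor_pair_sums e b 0 = {0}"
  unfolding cantor_pair_sums_def by auto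

lemma cantor_pair_sums_Suc:
  "cantor_pair_sums e b (Suc n) =
     {t + \<xi> ^ e * \<eta> ^ b | t \<xi> \<eta>. t \<in> cantor_pair_sums e b n \<and> \<xi> \<in> cantor_set \<and> \<eta> \<in> cantor_set}"
proof (intro equalityI subsetI)
  fix s
  assume "s \<in> cantor_pair_sums e b (Suc n)"
  then obtain \<xi> \<eta> where "\<forall>i<Suc n. \<xi> i \<in> cantor_set \<and> \<eta> i \<in> cantor_set"
    and "s = (\<Sum>i<n. \<xi> i ^ e * \<eta> i ^ b) + \<xi> n ^ e * \<eta> n ^ b"
    unfolding cantor_pair_sums_def by auto
  then show "s \<in> {t + \<xi> ^ e * \<eta> ^ b | t \<xi> \<eta>.
      t \<in> cantor_pair_sums e b n \<and> \<xi> \<in> cantor_set \<and> \<eta> \<in> cantor_set}"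
    unfolding cantor_pair_sums_def by fastforce
next
  fix s
  assume "s \<in> {t + \<xi> ^ e * \<eta> ^ b | t \<xi> \<eta>.
      t \<in> cantor_pair_sums e b n \<and> \<xi> \<in> cantor_set \<and> \<eta> \<in> cantor_set}"
  then obtain \<xi> \<eta> x y where xy: "x \<in> cantor_set" "y \<in> cantor_set"
    and \<xi>\<eta>: "\<forall>i<n. \<xi> i \<in> cantor_set \<and> \<eta> i \<in> cantor_set"
    and s: "s = (\<Sum>i<n. \<xi> i ^ e * \<eta> i ^ b) + x ^ e * y ^ b"
    unfolding cantor_pair_sums_def by blast
  have "(\<Sum>i<n. (\<xi>(n := x)) i ^ e * (\<eta>(n := y)) i ^ b) = (\<Sum>i<n. \<xi> i ^ e * \<eta> i ^ b)"
    by (rule sum.cong) auto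
  then have "s = (\<Sum>i<Suc n. (\<xi>(n := x)) i ^ e * (\<eta>(n := y)) i ^ b)"
    unfolding s by simp
  moreover have "\<forall>i<Suc n. (\<xi>(n := x)) i \<in> cantor_set \<and> (\<eta>(n := y)) i \<in> cantor_set"
    using xy \<xi>\<eta> by (simp add: less_Suc_eq)
  ultimately show "s \<in> cantor_pair_sums e b (Suc n)"
    unfolding cantor_pair_sums_def by (intro CollectI exI[of _ "\<xi>(n := x)"] exI[of _ "\<eta>(n := y)"]) simp
qed

lemma cantor_pair_sums_SucI:
  "t \<in> cantor_pair_sums e b n \<Longrightarrow> x \<in> cantor_set \<Longrightarrow> y \<in> cantor_set \<Longrightarrow>
     t + x ^ e * y ^ b \<in> cantor_pair_sums e b (Suc n)"
  unfolding cantor_pair_sums_Suc by blast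

lemma cantor_pair_sums_mono:
  assumes "1 \<le> e" "n \<le> m"
  shows "cantor_pair_sums e b n \<subseteq> cantor_pair_sums e b m"
proof (rule lift_Suc_mono_le[OF _ \<open>n \<le> m\<close>])
  show "cantor_pair_sums e b k \<subseteq> cantor_pair_sums e b (Suc k)" for k
  proof
    fix t
    assume "t \<in> cantor_pair_sums e b k"
    from cantor_pair_sums_SucI[OF this zero_in_cantor_set zero_in_cantor_set]
    show "t \<in> cantor_pair_sums e b (Suc k)"
      using \<open>1 \<le> e\<close> by (simp add: power_0_left)
  qed
qed

lemma cantor_pair_sums_scale:
  assumes "t \<in> cantor_pair_sums e b n"
  shows "(1/3) ^ e * t \<in> cantor_pair_sums e b n"
proof -
  obtain \<xi> \<eta> where \<xi>\<eta>: "\<forall>i<n. \<xi> i \<in> cantor_set \<and> \<eta> i \<in> cantor_set"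
    and t: "t = (\<Sum>i<n. \<xi> i ^ e * \<eta> i ^ b)"
    using assms unfolding cantor_pair_sums_def by blast
  have "(1/3) ^ e * t = (\<Sum>i<n. (\<xi> i / 3) ^ e * \<eta> i ^ b)"
    unfolding t sum_distrib_left by (simp add: power_divide)
  moreover have "\<forall>i<n. \<xi> i / 3 \<in> cantor_set \<and> \<eta> i \<in> cantor_set"
    using \<xi>\<eta> cantor_set_third(1) by blast
  ultimately show ?thesis
    unfolding cantor_pair_sums_def by (intro CollectI exI[of _ "\<lambda>i. \<xi> i / 3"] exI[of _ \<eta>]) simp
qed

lemma cantor_pair_sums_interval_extend:
  assumes "1 \<le> e" "x \<in> cantor_set" "{\<alpha>..\<beta>} \<subseteq> cantor_pair_sums e b n" "x ^ e \<le> \<beta> - \<alpha>"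
  shows "{\<alpha>..\<beta> + real k * x ^ e} \<subseteq> cantor_pair_sums e b (n + k)"
proof (induction k)
  case 0
  show ?case using assms(3) by simp
next
  case (Suc k)
  have "0 \<le> x"
    using assms(2) cantor_set_subset by auto
  have "{\<alpha>..\<beta> + real k * x ^ e + x ^ e} \<subseteq> cantor_pair_sums e b (Suc (n + k))"
  proof (rule interval_extend_step[OF Suc.IH])
    show "0 \<le> x ^ e"
      using \<open>0 \<le> x\<close> by simp
    then have "0 \<le> real k * x ^ e"
      by simp
    then show "x ^ e \<le> \<beta> + real k * x ^ e - \<alpha>"
      using assms(4) by linarith
    show "cantor_pair_sums e b (n + k) \<subseteq> cantor_pair_sums e b (Suc (n + k))"
      using \<open>1 \<le> e\<close> by (rule cantor_pair_sums_mono) simp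
    show "t + x ^ e \<in> cantor_pair_sums e b (Suc (n + k))" if "t \<in> cantor_pair_sums e b (n + k)" for t
      using cantor_pair_sums_SucI[OF that assms(2) one_in_cantor_set] by simp
  qed
  then show ?case
    by (simp add: algebra_simps)
qed

lemma zero_in_cantor_pair_sums: "1 \<le> e \<Longrightarrow> 0 \<in> cantor_pair_sums e b n"
  using cantor_pair_sums_mono[of e 0 n b] by (simp add: cantor_pair_sums_0)

lemma cantor_pair_sums_3_4:
  assumes "2 \<le> b"
  shows "{3..4} \<subseteq> cantor_pair_sums e b 4"
proof
  fix \<tau> :: real
  assume "\<tau> \<in> {3..4}"
  then have "3 \<le> \<tau>" "\<tau> \<le> 4"
    by auto
  then obtain z :: "nat \<Rightarrow> real" where z: "\<forall>i<4. z i \<in> cantor_set" "(\<Sum>i<4. z i ^ b) = \<tau>"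
    by (rule cantor_power_sums_3_4[OF assms])
  then show "\<tau> \<in> cantor_pair_sums e b 4"
    unfolding cantor_pair_sums_def
    by (intro CollectI exI[of _ "\<lambda>_. 1"] exI[of _ z]) (simp add: one_in_cantor_set)
qed

lemma cantor_pair_sums_from_3:
  assumes "1 \<le> e" "2 \<le> b" "4 \<le> r"
  shows "{3..real r} \<subseteq> cantor_pair_sums e b r"
  using cantor_pair_sums_interval_extend[OF assms(1) one_in_cantor_set cantor_pair_sums_3_4[OF assms(2)],
      of "r - 4"] assms(3)
  by (simp add: of_nat_diff)

text \<open>Below \<open>3\<close> the unit steps are too coarse: the scaled copy of \<open>[3, 3 + 2^e]\<close> reaches
  \<open>[3 (1/3)^e, 3 (1/3)^e + (2/3)^e]\<close>, and \<open>2^e\<close> steps of size \<open>(2/3)^e\<close> bridge a unit interval.\<close>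

lemma cantor_pair_sums_near_zero:
  assumes "1 \<le> e" "2 \<le> b"
  shows "{3 * (1/3) ^ e..3 * (1/3) ^ e + 3} \<subseteq> cantor_pair_sums e b (5 + 2 ^ (e + 1))"
proof -
  define u :: real where "u = (1/3) ^ e"
  define w :: real where "w = (2/3) ^ e"
  have "0 < u"
    unfolding u_def by simp
  have w_eq: "w = 2 ^ e * u"
    unfolding u_def w_def by (simp add: power_divide)
  have "{3..real (3 + 2 ^ e)} \<subseteq> cantor_pair_sums e b (3 + 2 ^ e)"
    using assms by (intro cantor_pair_sums_from_3) (simp_all add: Suc_leI)
  then have "{3 * u..3 * u + w} \<subseteq> cantor_pair_sums e b (3 + 2 ^ e)"
  proof (intro subsetI)
    fix t
    assume "t \<in> {3 * u..3 * u + w}"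
    then have "t / u \<in> {3..real (3 + 2 ^ e)}"
      using \<open>0 < u\<close> by (simp add: w_eq field_simps)
    moreover assume "{3..real (3 + 2 ^ e)} \<subseteq> cantor_pair_sums e b (3 + 2 ^ e)"
    ultimately have "u * (t / u) \<in> cantor_pair_sums e b (3 + 2 ^ e)"
      unfolding u_def by (blast intro: cantor_pair_sums_scale)
    with \<open>0 < u\<close> show "t \<in> cantor_pair_sums e b (3 + 2 ^ e)"
      by simp
  qed
  then have "{3 * u..3 * u + w + real (2 ^ e) * (2/3) ^ e} \<subseteq> cantor_pair_sums e b (3 + 2 ^ e + 2 ^ e)"
    using cantor_set_third(2)[OF zero_in_cantor_set] assms(1)
    by (intro cantor_pair_sums_interval_extend) (simp_all add: w_def)
  moreover have "1 \<le> real (2 ^ e) * (2/3 :: real) ^ e" "0 \<le> w"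
    by (simp_all add: w_def power_mult_distrib[symmetric])
  then have "{3 * u..3 * u + 1} \<subseteq> {3 * u..3 * u + w + real (2 ^ e) * (2/3) ^ e}"
    by auto
  ultimately have unit_interval: "{3 * u..3 * u + 1} \<subseteq> cantor_pair_sums e b (3 + 2 ^ e + 2 ^ e)"
    by (rule subset_trans[rotated])
  have "(1::real) ^ e \<le> 3 * u + 1 - 3 * u" "3 * u + 1 + real 2 * 1 ^ e = 3 * u + 3"
    "3 + 2 ^ e + 2 ^ e + 2 = 5 + (2::nat) ^ (e + 1)"
    by simp_all
  with cantor_pair_sums_interval_extend[OF assms(1) one_in_cantor_set unit_interval, of 2]
  show ?thesis
    unfolding u_def by metis
qed

lemma cantor_pair_sums_cover_interval:
  assumes "1 \<le> e" "2 \<le> b" "5 + 2 ^ (e + 1) \<le> r"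
  shows "{0..real r} \<subseteq> cantor_pair_sums e b r"
proof (rule interval_subset_if_scaling_closed)
  show "0 < (1/3::real) ^ e" "(1/3::real) ^ e < 1"
    using assms(1) by (simp_all add: power_less_one_iff)
  show "0 \<le> real r" "0 \<in> cantor_pair_sums e b r"
    using assms(1) by (simp_all add: zero_in_cantor_pair_sums)
  show "(1/3) ^ e * t \<in> cantor_pair_sums e b r" if "t \<in> cantor_pair_sums e b r" for t
    using that by (rule cantor_pair_sums_scale)
  show "{(1/3) ^ e * real r..real r} \<subseteq> cantor_pair_sums e b r"
  proof
    fix t
    assume t: "t \<in> {(1/3) ^ e * real r..real r}"
    show "t \<in> cantor_pair_sums e b r"
    proof (cases "3 \<le> t")
      case True
      with t assms cantor_pair_sums_from_3[of e b r] show ?thesis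
        by auto
    next
      case False
      have "3 * (1/3::real) ^ e \<le> (1/3) ^ e * real r"
        using assms(3) by (simp add: mult.commute)
      moreover have "(1/3) ^ e * real r \<le> t"
        using t by simp
      ultimately have "3 * (1/3) ^ e \<le> t"
        by linarith
      moreover have "t \<le> 3 * (1/3) ^ e + 3"
        using False zero_le_power[of "1/3::real" e] by linarith
      ultimately have "t \<in> {3 * (1/3) ^ e..3 * (1/3) ^ e + 3}"
        by simp
      with cantor_pair_sums_near_zero[OF assms(1,2)] cantor_pair_sums_mono[OF assms(1,3)]
      show ?thesis
        by blast
    qed
  qed
qed

section \<open>Pairs with prescribed exponents\<close>

definition pair_form_sums :: "(nat \<Rightarrow> nat) \<Rightarrow> nat set \<Rightarrow> real set" where
  "pair_form_sums a J =
     {\<Sum>i\<in>J. x (2*i - 1) ^ a (2*i - 1) * x (2*i) ^ a (2*i) | x. \<forall>j. x j \<in> cantor_set}"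

lemma pair_form_sums_empty: "pair_form_sums a {} = {0}"
  unfolding pair_form_sums_def using zero_in_cantor_set by auto

lemma pair_form_sums_insert:
  assumes "finite J" "i \<notin> J" "0 < i" "t \<in> pair_form_sums a J" "\<xi> \<in> cantor_set" "\<eta> \<in> cantor_set"
  shows "t + \<xi> ^ a (2*i - 1) * \<eta> ^ a (2*i) \<in> pair_form_sums a (insert i J)"
proof -
  obtain x where x: "\<forall>j. x j \<in> cantor_set"
    and t: "t = (\<Sum>j\<in>J. x (2*j - 1) ^ a (2*j - 1) * x (2*j) ^ a (2*j))"
    using assms(4) unfolding pair_form_sums_def by blast
  define y where "y = x(2*i - 1 := \<xi>, 2*i := \<eta>)"
  have "y (2*j - 1) = x (2*j - 1)" "y (2*j) = x (2*j)" if "j \<in> J" for j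
  proof -
    have "j \<noteq> i"
      using that assms(2) by auto
    with assms(3) show "y (2*j - 1) = x (2*j - 1)" "y (2*j) = x (2*j)"
      unfolding y_def by auto
  qed
  then have "t = (\<Sum>j\<in>J. y (2*j - 1) ^ a (2*j - 1) * y (2*j) ^ a (2*j))"
    unfolding t by (intro sum.cong) simp_all
  moreover have "2*i - 1 \<noteq> 2*i"
    using assms(3) by linarith
  then have "y (2*i - 1) = \<xi>" "y (2*i) = \<eta>"
    unfolding y_def by simp_all
  ultimately have "t + \<xi> ^ a (2*i - 1) * \<eta> ^ a (2*i)
      = (\<Sum>j\<in>insert i J. y (2*j - 1) ^ a (2*j - 1) * y (2*j) ^ a (2*j))"
    using assms(1,2) by simp
  moreover have "\<forall>j. y j \<in> cantor_set"
    using x assms(5,6) unfolding y_def by simp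
  ultimately show ?thesis
    unfolding pair_form_sums_def by blast
qed

lemma cantor_pair_sums_subset_pair_form_sums:
  assumes "finite J"
    and "\<forall>i\<in>J. 0 < i \<and> (a (2*i - 1) = e \<and> a (2*i) = b \<or> a (2*i - 1) = b \<and> a (2*i) = e)"
  shows "cantor_pair_sums e b (card J) \<subseteq> pair_form_sums a J"
  using assms
proof (induction J rule: finite_induct)
  case empty
  show ?case
    by (simp add: cantor_pair_sums_0 pair_form_sums_empty)
next
  case (insert i J)
  show ?case
  proof
    fix s
    assume "s \<in> cantor_pair_sums e b (card (insert i J))"
    then have "s \<in> cantor_pair_sums e b (Suc (card J))"
      using insert.hyps by simp
    then obtain t \<xi> \<eta> where t: "t \<in> cantor_pair_sums e b (card J)"
      and \<xi>\<eta>: "\<xi> \<in> cantor_set" "\<eta> \<in> cantor_set" and s: "s = t + \<xi> ^ e * \<eta> ^ b"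
      unfolding cantor_pair_sums_Suc by blast
    have "t \<in> pair_form_sums a J"
      using insert.IH insert.prems t by blast
    moreover have "0 < i" "a (2*i - 1) = e \<and> a (2*i) = b \<or> a (2*i - 1) = b \<and> a (2*i) = e"
      using insert.prems by auto
    ultimately show "s \<in> pair_form_sums a (insert i J)"
      using pair_form_sums_insert[OF insert.hyps(1,2)] \<xi>\<eta> unfolding s
      by (metis mult.commute)
  qed
qed

lemma pair_form_sums_extend_by_units:
  assumes "finite J" "I \<inter> J = {}" "\<forall>i\<in>J. 0 < i \<and> 0 < a (2*i - 1) \<and> 0 < a (2*i)"
    and "finite I" "1 \<le> r" "{0..r} \<subseteq> pair_form_sums a I"
  shows "{0..r + real (card J)} \<subseteq> pair_form_sums a (I \<union> J)"
  using assms(1-3)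
proof (induction J rule: finite_induct)
  case empty
  then show ?case using assms(6) by simp
next
  case (insert i J)
  have i: "i \<notin> I \<union> J" "0 < i" "0 < a (2*i - 1)" "0 < a (2*i)"
    using insert.hyps(2) insert.prems by auto
  have "{0..r + real (card J) + 1} \<subseteq> pair_form_sums a (insert i (I \<union> J))"
  proof (rule interval_extend_step[OF insert.IH])
    show "I \<inter> J = {}" "\<forall>i\<in>J. 0 < i \<and> 0 < a (2*i - 1) \<and> 0 < a (2*i)"
      using insert.prems by auto
    show "(0::real) \<le> 1" "1 \<le> r + real (card J) - 0"
      using assms(5) by simp_all
    show "pair_form_sums a (I \<union> J) \<subseteq> pair_form_sums a (insert i (I \<union> J))"
      using pair_form_sums_insert[where a = a, OF _ i(1,2) _ zero_in_cantor_set zero_in_cantor_set]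
        i(3,4) insert.hyps(1) assms(4) by (auto simp: power_0_left)
    show "t + 1 \<in> pair_form_sums a (insert i (I \<union> J))" if "t \<in> pair_form_sums a (I \<union> J)" for t
      using pair_form_sums_insert[where a = a, OF _ i(1,2) that one_in_cantor_set one_in_cantor_set]
        insert.hyps(1) assms(4) by simp
  qed
  then show ?case
    using insert.hyps by (simp add: algebra_simps)
qed

section \<open>The size condition\<close>

lemma double_le_power_two: "2 * n \<le> (2::nat) ^ n"
proof (induction n)
  case (Suc n)
  have "1 \<le> (2::nat) ^ n"
    by simp
  with Suc.IH show ?case
    by (cases n) auto
qed simp

lemma exists_large_fibre:
  fixes f :: "nat \<Rightarrow> nat" and A :: "nat set"
  assumes "finite A" "f ` A \<subseteq> {1..E}" "6 * 2 ^ E \<le> card A"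
  shows "\<exists>e\<in>{1..E}. 5 + 2 ^ (e + 1) \<le> card {i\<in>A. f i = e}"
proof (rule ccontr)
  assume none: "\<not> ?thesis"
  have small: "card {i\<in>A. f i = e} \<le> 4 + 2 ^ (e + 1)" if "e \<in> {1..E}" for e
  proof -
    from none that have "\<not> 5 + 2 ^ (e + 1) \<le> card {i\<in>A. f i = e}"
      by blast
    then show ?thesis
      by linarith
  qed
  have total: "(\<Sum>e\<in>{1..n}. 4 + 2 ^ (e + 1)) + 4 = 4 * n + (2::nat) ^ (n + 2)" for n
    by (induction n) (simp_all add: sum.cl_ivl_Suc)
  have "A = (\<Union>e\<in>{1..E}. {i\<in>A. f i = e})"
    using assms(2) by blast
  then have "card A = card (\<Union>e\<in>{1..E}. {i\<in>A. f i = e})"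
    by (rule arg_cong)
  also have "\<dots> \<le> (\<Sum>e\<in>{1..E}. card {i\<in>A. f i = e})"
    by (rule card_UN_le) simp
  also have "\<dots> \<le> (\<Sum>e\<in>{1..E}. 4 + 2 ^ (e + 1))"
    using small by (rule sum_mono)
  finally have "card A + 4 \<le> 4 * E + 2 ^ (E + 2)"
    using total[of E] by linarith
  moreover have "(2::nat) ^ (E + 2) = 4 * 2 ^ E"
    by simp
  ultimately show False
    using double_le_power_two[of E] assms(3) by linarith
qed

lemma powr_bernoulli:
  fixes p x :: real
  assumes "1 \<le> p" "0 \<le> x"
  shows "1 + p * x \<le> (1 + x) powr p"
proof -
  have pos: "0 < 1 + p * x"
    using assms by (simp add: add_pos_nonneg)
  have "(1 + p * x) powr (1 / p) * 1 powr (1 - 1 / p) \<le> (1 / p) * (1 + p * x) + (1 - 1 / p) * 1"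
    using assms pos by (intro Youngs_inequality_0) auto
  also have "\<dots> = 1 + x"
    using assms by (simp add: field_simps)
  finally have "(1 + p * x) powr (1 / p) \<le> 1 + x"
    by simp
  then have "((1 + p * x) powr (1 / p)) powr p \<le> (1 + x) powr p"
    using assms by (intro powr_mono2) auto
  with pos assms show ?thesis
    by (simp add: powr_powr)
qed

lemma threshold_factor_gt_4:
  fixes s :: nat
  assumes "3 \<le> s"
  shows "4 < ((real s + 3) / (real s - 2)) powr (real s / 2 - 1) * ((5 * real s + 6) / (5 * real s - 6))"
proof -
  define B where "B = (real s + 3) / (real s - 2)"
  define p where "p = real s / 2 - 1"
  define F where "F = (5 * real s + 6) / (5 * real s - 6)"
  define x where "x = 5 / (real s - 2)"
  have s3: "3 \<le> real s"
    using assms by simp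
  have B_eq: "B = 1 + x" and "0 \<le> x" and px: "p * x = 5 / 2" and "1 \<le> F"
    unfolding B_def x_def p_def F_def using s3 by (simp_all add: field_simps)
  have "4 < B powr p * F"
  proof (cases "s = 3")
    case True
    then have "B powr p * F = 6 powr (1 / 2) * (21 / 9)"
      unfolding B_def p_def F_def by simp
    moreover have "(2::real) \<le> 6 powr (1 / 2)"
      using powr_mono2[of "1/2" 4 "6::real"] by (simp add: powr_half_sqrt)
    ultimately show ?thesis
      by linarith
  next
    case False
    show ?thesis
    proof (cases "6 \<le> s")
      case True
      then have "1 \<le> p / 2"
        unfolding p_def by simp
      from powr_bernoulli[OF this \<open>0 \<le> x\<close>] have "9 / 4 \<le> B powr (p / 2)"
        using px B_eq by simp
      then have "9 / 4 * (9 / 4) \<le> B powr (p / 2) * B powr (p / 2)"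
        by (intro mult_mono) auto
      also have "\<dots> = B powr p"
        using B_eq \<open>0 \<le> x\<close> by (simp flip: powr_add)
      finally have "81 / 16 \<le> B powr p"
        by simp
      moreover have "B powr p \<le> B powr p * F"
        using \<open>1 \<le> F\<close> by (simp add: mult_le_cancel_left1)
      ultimately show ?thesis
        by linarith
    next
      case False
      with \<open>s \<noteq> 3\<close> assms have s45: "4 \<le> real s" "real s \<le> 5"
        by simp_all
      then have "1 \<le> p"
        unfolding p_def by simp
      from powr_bernoulli[OF this \<open>0 \<le> x\<close>] have "7 / 2 \<le> B powr p"
        using px B_eq by simp
      moreover have "8 / 7 < F"
        unfolding F_def using s45 by (simp add: field_simps)
      ultimately have "7 / 2 * (8 / 7) < B powr p * F"
        by (intro mult_le_less_imp_less) auto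
      then show ?thesis
        by simp
    qed
  qed
  then show ?thesis
    unfolding B_def p_def F_def .
qed

lemma threshold_bound:
  fixes s k :: nat
  assumes "2 < s"
    and "real k \<ge> 2 powr (real s / 2 + 1) *
           real_of_int \<lceil>((real s + 3) / (real s - 2)) powr (real s / 2 - 1)
                         * ((5 * real s + 6) / (5 * real s - 6)) + 1\<rceil>"
  shows "12 * 2 ^ (s div 2) \<le> k"
proof -
  define X where "X = ((real s + 3) / (real s - 2)) powr (real s / 2 - 1) * ((5 * real s + 6) / (5 * real s - 6))"
  have "4 < X"
    unfolding X_def using threshold_factor_gt_4[of s] assms(1) by simp
  then have "5 < \<lceil>X + 1\<rceil>"
    by linarith
  then have "6 \<le> real_of_int \<lceil>X + 1\<rceil>"
    by simp
  have "real (s div 2) \<le> real s / 2"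
    by linarith
  then have "(2::real) ^ (s div 2) \<le> 2 powr (real s / 2)"
    by (simp add: powr_realpow[symmetric])
  then have "2 * 2 ^ (s div 2) \<le> (2::real) powr (real s / 2 + 1)"
    by (simp add: powr_add)
  with \<open>6 \<le> real_of_int \<lceil>X + 1\<rceil>\<close> have "(2 * 2 ^ (s div 2)) * 6 \<le> 2 powr (real s / 2 + 1) * real_of_int \<lceil>X + 1\<rceil>"
    by (intro mult_mono) auto
  with assms(2) have "real (12 * 2 ^ (s div 2)) \<le> real k"
    unfolding X_def by simp
  then show ?thesis
    by (simp only: of_nat_le_iff)
qed

lemma interval_subset_pair_form_sums:
  fixes a :: "nat \<Rightarrow> nat" and s m :: nat
  assumes "2 < s" "6 * 2 ^ (s div 2) \<le> m"
    and pairs: "\<forall>i\<in>{1..m}. 0 < a (2*i - 1) \<and> 0 < a (2*i) \<and> a (2*i - 1) + a (2*i) = s"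
  shows "{0..real m} \<subseteq> pair_form_sums a {1..m}"
proof -
  define f where "f i = min (a (2*i - 1)) (a (2*i))" for i
  have "f ` {1..m} \<subseteq> {1..s div 2}"
    using pairs unfolding f_def by fastforce
  then obtain e where e: "e \<in> {1..s div 2}" and large: "5 + 2 ^ (e + 1) \<le> card {i\<in>{1..m}. f i = e}"
    using exists_large_fibre[of "{1..m}" f "s div 2"] assms(2) by auto
  define I where "I = {i\<in>{1..m}. f i = e}"
  have "I \<subseteq> {1..m}"
    unfolding I_def by blast
  have oriented: "\<forall>i\<in>I. 0 < i \<and> (a (2*i - 1) = e \<and> a (2*i) = s - e \<or> a (2*i - 1) = s - e \<and> a (2*i) = e)"
  proof
    fix i
    assume "i \<in> I"
    then have "0 < i" "min (a (2*i - 1)) (a (2*i)) = e" "a (2*i - 1) + a (2*i) = s"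
      using pairs unfolding I_def f_def by auto
    then show "0 < i \<and> (a (2*i - 1) = e \<and> a (2*i) = s - e \<or> a (2*i - 1) = s - e \<and> a (2*i) = e)"
      unfolding min_def by (cases "a (2*i - 1) \<le> a (2*i)") auto
  qed
  have "1 \<le> e" "2 \<le> s - e"
    using e assms(1) by auto
  then have "{0..real (card I)} \<subseteq> cantor_pair_sums e (s - e) (card I)"
    using large unfolding I_def by (intro cantor_pair_sums_cover_interval)
  also have "\<dots> \<subseteq> pair_form_sums a I"
    using oriented by (intro cantor_pair_sums_subset_pair_form_sums) (simp_all add: I_def)
  finally have "{0..real (card I) + real (card ({1..m} - I))} \<subseteq> pair_form_sums a (I \<union> ({1..m} - I))"
    using pairs large by (intro pair_form_sums_extend_by_units) (auto simp: I_def)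
  moreover have "card I \<le> m"
    using card_mono[OF _ \<open>I \<subseteq> {1..m}\<close>] by simp
  then have "I \<union> ({1..m} - I) = {1..m}" "card I + card ({1..m} - I) = m"
    using \<open>I \<subseteq> {1..m}\<close> by (auto simp: card_Diff_subset finite_subset)
  ultimately show ?thesis
    by (metis of_nat_add)
qed

lemma pair_form_value_bounds:
  fixes a :: "nat \<Rightarrow> nat" and x :: "nat \<Rightarrow> real"
  assumes "\<forall>j\<in>{1..2*m}. x j \<in> cantor_set"
  shows "(\<Sum>i=1..m. x (2*i - 1) ^ a (2*i - 1) * x (2*i) ^ a (2*i)) \<in> {0..real m}"
proof -
  have unit: "0 \<le> x j \<and> x j \<le> 1" if "j \<in> {1..2*m}" for j
  proof -
    have "x j \<in> {0..1}"
      using assms that cantor_set_subset by blast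
    then show ?thesis
      by simp
  qed
  have "0 \<le> x (2*i - 1) ^ a (2*i - 1) * x (2*i) ^ a (2*i)
      \<and> x (2*i - 1) ^ a (2*i - 1) * x (2*i) ^ a (2*i) \<le> 1" if "i \<in> {1..m}" for i
  proof -
    have "2*i - 1 \<in> {1..2*m}" "2*i \<in> {1..2*m}"
      using that by auto
    with unit show ?thesis
      by (auto intro!: mult_le_one power_le_one)
  qed
  then show ?thesis
    using sum_mono[of "{1..m}" _ "\<lambda>_. 1::real"] by (auto intro: sum_nonneg)
qed

theorem theorem1p1:
  fixes s k :: nat and a :: "nat \<Rightarrow> nat"
  assumes "s > 2"
    and "k > 0" and "even k"
    and "\<And>i. 1 \<le> i \<Longrightarrow> i \<le> k \<Longrightarrow> a i > 0"
    and "\<And>i. 1 \<le> i \<Longrightarrow> i \<le> k div 2 \<Longrightarrow> a (2*i - 1) + a (2*i) = s"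
    and "real k \<ge> 2 powr (real s / 2 + 1) *
           real_of_int \<lceil>((real s + 3) / (real s - 2)) powr (real s / 2 - 1)
                         * ((5 * real s + 6) / (5 * real s - 6)) + 1\<rceil>"
  shows "{0 .. real k / 2} =
         {y. \<exists>x :: nat \<Rightarrow> real. (\<forall>i\<in>{1..k}. x i \<in> cantor_set) \<and>
              y = (\<Sum>i=1..k div 2. x (2*i - 1) ^ a (2*i - 1) * x (2*i) ^ a (2*i))}"
proof -
  define m where "m = k div 2"
  have k: "k = 2 * m" "real k / 2 = real m"
    using \<open>even k\<close> unfolding m_def by auto
  have "{0..real m} \<subseteq> pair_form_sums a {1..m}"
  proof (rule interval_subset_pair_form_sums[OF assms(1)])
    show "6 * 2 ^ (s div 2) \<le> m"
      using threshold_bound[OF assms(1,6)] k by simp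
    show "\<forall>i\<in>{1..m}. 0 < a (2*i - 1) \<and> 0 < a (2*i) \<and> a (2*i - 1) + a (2*i) = s"
      using assms(4,5) k unfolding m_def by auto
  qed
  then show ?thesis
    using pair_form_value_bounds[of m _ a] k unfolding pair_form_sums_def m_def by fastforce
qed

end
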